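(* Consider the setting described in the context and suppose Assumptions (A1) and (A2) hold. Fix a policy $\pi$ and estimated nuisance functions $\hat\mu_0,\hat\mu_1,\hat e_1,\hat s$. Then $\hat R_{\mathrm{SE}}(\pi)$ is an unbiased estimator of $R(\pi)$ if at least one of the following holds: (i) $\hat\mu_a(x)=\mu_a(x)$ for $a=0,1$; (ii) $\hat e_1(x)=e_1(x)$ and $\hat s(x)=s(x)$.
   Context: Setting: $A\in\{0,1\}$ is a binary treatment, $X\in\mathcal{X}\subset\mathbb{R}^p$ covariates, $Y\in\mathbb{R}$ outcome, $Y(a)$ potential outcomes with $Y=AY(1)+(1-A)Y(0)$. $G\in\{0,1\}$ indicates the source ($G=1$) or target ($G=0$) domain. Data: $n_1$ source units with observed $(X_i,A_i,Y_i,G_i=1)$ and $n_0$ target units with observed $(X_i,G_i=0)$ only; $n=n_0+n_1$ and $q=n_1/n$ (the probability of a unit belonging to the source population). Nuisance functions: $e_1(x)=\mathbb{P}(A=1\mid X=x,G=1)$, $s(x)=\mathbb{P}(G=1\mid X=x)$, $\mu_a(x)=\mathbb{E}[Y\mid X=x,A=a,G=1]$. For a policy $\pi:\mathcal{X}\to\{0,1\}$, $R(\pi)=\mathbb{E}[\pi(X)Y(1)+(1-\pi(X))Y(0)\mid G=0]$. Assumption (A1): $(Y(1),Y(0))\perp\!\!\!\perp A\mid X,G=1$ and $0<e_1(X)<1$. Assumption (A2): $(Y(0),Y(1))\perp\!\!\!\perp G\mid X$ and $0<s(X)<1$ for all $X$ in the source domain. The SE estimator is $$\hat R_{\mathrm{SE}}(\pi)=\frac1n\sum_{i=1}^n\Big[\frac{G_i}{1-q}\frac{\pi(X_i)A_i\{Y_i-\hat\mu_1(X_i)\}}{\hat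 e_1(X_i)}\frac{1-\hat s(X_i)}{\hat s(X_i)}+\frac{G_i}{1-q}\frac{(1-\pi(X_i))(1-A_i)\{Y_i-\hat\mu_0(X_i)\}}{1-\hat e_1(X_i)}\frac{1-\hat s(X_i)}{\hat s(X_i)}+\frac{1-G_i}{1-q}\{\pi(X_i)\hat\mu_1(X_i)+(1-\pi(X_i))\hat\mu_0(X_i)\}\Big].$$ *)

theory Defs
  imports "HOL-Probability.Probability"
begin

definition sigma_of :: "'w measure \<Rightarrow> 'b measure \<Rightarrow> ('w \<Rightarrow> 'b) \<Rightarrow> 'w measure" where
  "sigma_of N MV V = vimage_algebra (space N) V MV"

definition cond_on :: "'w measure \<Rightarrow> ('w \<Rightarrow> bool) \<Rightarrow> 'w measure" where
  "cond_on N P = uniform_measure N {w \<in> space N. P w}"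

text \<open>f is a version of the regression function x \<mapsto> E_N[Z | V = x], i.e.
  f is measurable and f(V) = E_N[Z | sigma(V)] almost surely.\<close>
definition is_cond_exp_fn :: "'w measure \<Rightarrow> ('w \<Rightarrow> 'x::topological_space) \<Rightarrow> ('w \<Rightarrow> real) \<Rightarrow> ('x \<Rightarrow> real) \<Rightarrow> bool" where
  "is_cond_exp_fn N V Z f \<longleftrightarrow> f \<in> borel_measurable borel \<and>
     (AE w in N. f (V w) = real_cond_exp N (sigma_of N borel V) Z w)"

definition cond_indep :: "'w measure \<Rightarrow> 'a measure \<Rightarrow> ('w \<Rightarrow> 'a) \<Rightarrow> 'b measure \<Rightarrow> ('w \<Rightarrow> 'b)
    \<Rightarrow> 'c measure \<Rightarrow> ('w \<Rightarrow> 'c) \<Rightarrow> bool" where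
  "cond_indep N MZ Z MW W MV V \<longleftrightarrow>
     (\<forall>S \<in> sets MZ. \<forall>T \<in> sets MW. AE w in N.
        real_cond_exp N (sigma_of N MV V) (\<lambda>u. indicator S (Z u) * indicator T (W u)) w
        = real_cond_exp N (sigma_of N MV V) (\<lambda>u. indicator S (Z u)) w
          * real_cond_exp N (sigma_of N MV V) (\<lambda>u. indicator T (W u)) w)"

definition policy_value :: "'w measure \<Rightarrow> ('w \<Rightarrow> 'x) \<Rightarrow> ('w \<Rightarrow> real) \<Rightarrow> ('w \<Rightarrow> real) \<Rightarrow> ('w \<Rightarrow> real)
    \<Rightarrow> ('x \<Rightarrow> real) \<Rightarrow> real" where
  "policy_value N X G Y0 Y1 pol =
     (\<integral> w. pol (X w) * Y1 w + (1 - pol (X w)) * Y0 w \<partial>(cond_on N (\<lambda>w. G w = 0)))"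

definition se_term :: "real \<Rightarrow> ('x \<Rightarrow> real) \<Rightarrow> ('x \<Rightarrow> real) \<Rightarrow> ('x \<Rightarrow> real) \<Rightarrow> ('x \<Rightarrow> real)
    \<Rightarrow> ('x \<Rightarrow> real) \<Rightarrow> 'x \<times> real \<times> real \<times> real \<Rightarrow> real" where
  "se_term q pol mu0h mu1h eh sh u = (case u of (x, g, a, y) \<Rightarrow>
       g / (1 - q) * (pol x * a * (y - mu1h x) / eh x) * ((1 - sh x) / sh x)
     + g / (1 - q) * ((1 - pol x) * (1 - a) * (y - mu0h x) / (1 - eh x)) * ((1 - sh x) / sh x)
     + (1 - g) / (1 - q) * (pol x * mu1h x + (1 - pol x) * mu0h x))"

definition R_SE :: "nat \<Rightarrow> real \<Rightarrow> ('x \<Rightarrow> real) \<Rightarrow> ('x \<Rightarrow> real) \<Rightarrow> ('x \<Rightarrow> real) \<Rightarrow> ('x \<Rightarrow> real)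
    \<Rightarrow> ('x \<Rightarrow> real) \<Rightarrow> (nat \<Rightarrow> 'x \<times> real \<times> real \<times> real) \<Rightarrow> real" where
  "R_SE n q pol mu0h mu1h eh sh z = (1 / real n) * (\<Sum>i<n. se_term q pol mu0h mu1h eh sh (z i))"

end

(* Condition everything on F = sigma(X).  Assumption (A2) gives
   E[G f(Y0, Y1) | F] = s(X) E[f(Y0, Y1) | F], and (A1), which lives in the source population
   M( . | G = 1), gives E[G A f(Y0, Y1) | F] = s(X) e1(X) E[f(Y0, Y1) | F].  By Bayes' rule the
   outcome regressions are then mu_a(X) = E[Y(a) | F], and the target value is
   R(pi) = E[(1 - s(X)) (pi(X) E[Y(1) | F] + (1 - pi(X)) E[Y(0) | F])] / (1 - q).
   Conditioning one term of the estimator on F turns it into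
     w1(X) s(X) e1(X) (E[Y(1) | F] - mu1h(X)) + w0(X) s(X) (1 - e1(X)) (E[Y(0) | F] - mu0h(X))
       + (1 - s(X)) (pi(X) mu1h(X) + (1 - pi(X)) mu0h(X)) / (1 - q),
   with w1, w0 the inverse-probability weights built from eh and sh.  Under (i) the residuals
   vanish and the last term is the integrand of R(pi); under (ii) the weights reduce the residual
   terms to (1 - s(X)) pi(X) (E[Y(1) | F] - mu1h(X)) / (1 - q) and its control analogue, and the
   mu-hat terms cancel.  The estimator is an average of n such terms. *)

theory Submission
  imports Defs
begin

lemma sigma_finite_subalgebra_sigma_of:
  fixes X :: "'w \<Rightarrow> 'x::topological_space"
  assumes "prob_space N" "X \<in> borel_measurable N"
  shows "sigma_finite_subalgebra N (sigma_of N borel X)"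
proof -
  interpret prob_space N by fact
  have "subalgebra N (sigma_of N borel X)"
    unfolding subalgebra_def sigma_of_def
    using sets_image_in_sets[of N "space N" X borel] assms(2) by auto
  then show ?thesis
    by (intro finite_measure_subalgebra_is_sigma_finite)
       (simp add: finite_measure_axioms finite_measure_subalgebra_axioms.intro finite_measure_subalgebra_def)
qed

lemma measurable_sigma_of_comp:
  fixes X :: "'w \<Rightarrow> 'x::topological_space"
  assumes "h \<in> borel_measurable borel"
  shows "(\<lambda>w. h (X w)) \<in> borel_measurable (sigma_of N borel X)"
proof -
  have "X \<in> measurable (sigma_of N borel X) borel"
    unfolding sigma_of_def by (rule measurable_vimage_algebra1) auto
  then show ?thesis using assms by (rule measurable_compose)
qed

lemma sigma_of_uniform_measure [simp]: "sigma_of (uniform_measure M E) MV V = sigma_of M MV V"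
  by (simp add: sigma_of_def)

lemma integrable_mult_bounded:
  fixes f g :: "'w \<Rightarrow> real"
  assumes "integrable M f" "g \<in> borel_measurable M" "\<And>w. w \<in> space M \<Longrightarrow> \<bar>g w\<bar> \<le> C"
  shows "integrable M (\<lambda>w. g w * f w)"
proof (rule Bochner_Integration.integrable_bound[where f="\<lambda>w. C * f w"])
  show "integrable M (\<lambda>w. C * f w)" using assms(1) by simp
  show "(\<lambda>w. g w * f w) \<in> borel_measurable M" using assms(1,2) by measurable
  show "AE w in M. norm (g w * f w) \<le> norm (C * f w)"
  proof (rule AE_I2)
    fix w assume w: "w \<in> space M"
    have "\<bar>g w\<bar> * \<bar>f w\<bar> \<le> C * \<bar>f w\<bar>" using assms(3)[OF w] by (rule mult_right_mono) simp
    moreover have "0 \<le> C" using assms(3)[OF w] by linarith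
    ultimately show "norm (g w * f w) \<le> norm (C * f w)" by (simp add: abs_mult)
  qed
qed

context finite_measure
begin

lemma
  fixes f :: "'a \<Rightarrow> real"
  assumes E: "E \<in> sets M" "0 < measure M E" and f: "f \<in> borel_measurable M"
  shows integral_uniform_measure:
      "integral\<^sup>L (uniform_measure M E) f = (\<integral>x. indicator E x * f x \<partial>M) / measure M E"
    and integrable_uniform_measure_iff:
      "integrable (uniform_measure M E) f \<longleftrightarrow> integrable M (\<lambda>x. indicator E x * f x)"
proof -
  have dens: "(\<lambda>x. indicator E x / measure M E) \<in> borel_measurable M" using E by simp
  have unif: "uniform_measure M E = density M (\<lambda>x. ennreal (indicator E x / measure M E))"
    unfolding uniform_measure_def
    by (rule density_cong)
       (use E in \<open>auto simp: emeasure_eq_measure divide_ennreal indicator_def ennreal_1[symmetric]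
                       simp del: ennreal_1\<close>)
  have "integral\<^sup>L (uniform_measure M E) f = (\<integral>x. (indicator E x / measure M E) *\<^sub>R f x \<partial>M)"
    unfolding unif by (rule integral_density[OF f dens]) (use E in auto)
  then show "integral\<^sup>L (uniform_measure M E) f = (\<integral>x. indicator E x * f x \<partial>M) / measure M E"
    by simp
  have "integrable (uniform_measure M E) f
      \<longleftrightarrow> integrable M (\<lambda>x. (1 / measure M E) * (indicator E x * f x))"
    unfolding unif by (subst integrable_density[OF f dens]) (use E in \<open>auto simp: mult.commute\<close>)
  then show "integrable (uniform_measure M E) f \<longleftrightarrow> integrable M (\<lambda>x. indicator E x * f x)"
    using E by (simp only: integrable_mult_left_iff) simp
qed

lemma integral_weighted_eq_of_indicators:
  fixes P Q :: "'a \<Rightarrow> real" and \<phi> :: "'v \<Rightarrow> real"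
  assumes V: "V \<in> measurable M MV" and \<phi>: "\<phi> \<in> borel_measurable MV"
    and PQ: "P \<in> borel_measurable M" "Q \<in> borel_measurable M"
      "\<And>w. w \<in> space M \<Longrightarrow> 0 \<le> P w \<and> P w \<le> 1" "\<And>w. w \<in> space M \<Longrightarrow> 0 \<le> Q w \<and> Q w \<le> 1"
    and eq: "\<And>S. S \<in> sets MV \<Longrightarrow>
      (\<integral>w. P w * indicator S (V w) \<partial>M) = (\<integral>w. Q w * indicator S (V w) \<partial>M)"
  shows "(\<integral>w. P w * \<phi> (V w) \<partial>M) = (\<integral>w. Q w * \<phi> (V w) \<partial>M)"
proof -
  \<comment> \<open>both sides integrate \<open>\<phi>\<close> against the image of the measure with density \<open>P\<close> (resp. \<open>Q\<close>) under \<open>V\<close>\<close>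
  have emeasure_image: "emeasure (distr (density M R) MV V) S = ennreal (\<integral>w. R w * indicator S (V w) \<partial>M)"
    if R: "R \<in> borel_measurable M" "\<And>w. w \<in> space M \<Longrightarrow> 0 \<le> R w \<and> R w \<le> 1"
      and S: "S \<in> sets MV" for R S
  proof -
    have pre: "V -` S \<inter> space M \<in> sets M" using V S by (rule measurable_sets)
    have RS: "(\<lambda>w. R w * indicator S (V w)) \<in> borel_measurable M" using R V S by measurable
    have "emeasure (distr (density M R) MV V) S = (\<integral>\<^sup>+ w. ennreal (R w) * indicator (V -` S \<inter> space M) w \<partial>M)"
      using V S R pre by (simp add: emeasure_distr emeasure_density)
    also have "\<dots> = (\<integral>\<^sup>+ w. ennreal (R w * indicator S (V w)) \<partial>M)"
      by (rule nn_integral_cong) (auto simp: indicator_def)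
    also have "\<dots> = ennreal (\<integral>w. R w * indicator S (V w) \<partial>M)"
      by (rule nn_integral_eq_integral)
         (use R RS in \<open>auto intro!: integrable_const_bound[where B=1] simp: indicator_def\<close>)
    finally show ?thesis .
  qed
  have integral_image: "integral\<^sup>L (distr (density M R) MV V) \<phi> = (\<integral>w. R w * \<phi> (V w) \<partial>M)"
    if R: "R \<in> borel_measurable M" "\<And>w. w \<in> space M \<Longrightarrow> 0 \<le> R w" for R
  proof -
    have "integral\<^sup>L (distr (density M R) MV V) \<phi> = integral\<^sup>L (density M R) (\<lambda>w. \<phi> (V w))"
      by (rule integral_distr) (use V \<phi> in simp_all)
    also have "\<dots> = (\<integral>w. R w *\<^sub>R \<phi> (V w) \<partial>M)"
      by (rule integral_density) (use V \<phi> R in auto)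
    finally show ?thesis by simp
  qed
  have "distr (density M P) MV V = distr (density M Q) MV V"
    by (rule measure_eqI) (use PQ eq in \<open>simp_all add: emeasure_image\<close>)
  then show ?thesis using PQ by (simp add: integral_image[symmetric])
qed

end

lemma (in prob_space) integral_pos_AE:
  fixes f :: "'a \<Rightarrow> real"
  assumes "integrable M f" "AE w in M. 0 < f w"
  shows "0 < integral\<^sup>L M f"
proof -
  have nonneg: "AE w in M. 0 \<le> f w" using assms(2) by eventually_elim auto
  have "integral\<^sup>L M f \<noteq> 0"
  proof
    assume "integral\<^sup>L M f = 0"
    then have "AE w in M. f w = 0" using integral_nonneg_eq_0_iff_AE[OF assms(1) nonneg] by simp
    with assms(2) have "AE w in M. False" by eventually_elim auto
    then show False by simp
  qed
  with integral_nonneg_AE[OF nonneg] show ?thesis by simp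
qed

lemma integral_PiM_average:
  fixes f :: "'a \<Rightarrow> real"
  assumes D: "prob_space D" and f: "integrable D f" and n: "n > 0"
  shows "(\<integral>z. 1 / real n * (\<Sum>i<n. f (z i)) \<partial>PiM {..<n} (\<lambda>_. D)) = integral\<^sup>L D f"
proof -
  let ?P = "PiM {..<n} (\<lambda>_. D)"
  have [measurable]: "f \<in> borel_measurable D" using f by auto
  have coord: "(\<lambda>z. z i) \<in> measurable ?P D" "distr ?P D (\<lambda>z. z i) = D" if "i \<in> {..<n}" for i
    using that distr_PiM_component[OF D that] by auto
  have "integrable ?P (\<lambda>z. f (z i))" if "i \<in> {..<n}" for i
    using f coord[OF that] integrable_distr_eq[OF coord(1)[OF that], of f] by simp
  moreover have "(\<integral>z. f (z i) \<partial>?P) = integral\<^sup>L D f" if "i \<in> {..<n}" for i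
    using coord[OF that] integral_distr[OF coord(1)[OF that], of f] by simp
  ultimately show ?thesis
    using n by (simp add: Bochner_Integration.integral_sum)
qed

section \<open>Conditional expectations\<close>

context sigma_finite_subalgebra
begin

lemma real_cond_exp_indicator_mult:
  assumes [measurable]: "g \<in> borel_measurable M" and B: "B \<in> sets F"
  shows "AE x in M. real_cond_exp M F (\<lambda>x. indicator B x * g x) x = indicator B x * real_cond_exp M F g x"
proof -
  have [measurable]: "(\<lambda>x. indicator B x :: ennreal) \<in> borel_measurable F" using B by simp
  have pos: "(\<lambda>x. ennreal (indicator B x * g x)) = (\<lambda>x. indicator B x * ennreal (g x))"
    and neg: "(\<lambda>x. ennreal (- (indicator B x * g x))) = (\<lambda>x. indicator B x * ennreal (- g x))"
    by (auto simp: indicator_def fun_eq_iff)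
  have "AE x in M. indicator B x * nn_cond_exp M F (\<lambda>x. ennreal (g x)) x
      = nn_cond_exp M F (\<lambda>x. indicator B x * ennreal (g x)) x"
    and "AE x in M. indicator B x * nn_cond_exp M F (\<lambda>x. ennreal (- g x)) x
      = nn_cond_exp M F (\<lambda>x. indicator B x * ennreal (- g x)) x"
    by (rule nn_cond_exp_prod; simp)+
  then show ?thesis
    unfolding real_cond_exp_def pos neg by eventually_elim (auto simp: indicator_def)
qed

text \<open>Pulling out an \<open>F\<close>-measurable factor without assuming that the product is integrable:
  the identity is proved on the \<open>F\<close>-sets where \<open>\<bar>\<phi>\<bar> \<le> k\<close>, which exhaust the space.\<close>

lemma real_cond_exp_mult_add:
  assumes \<phi>: "\<phi> \<in> borel_measurable F" and g: "integrable M g" and h: "integrable M h"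
  shows "AE x in M. real_cond_exp M F (\<lambda>x. \<phi> x * g x + h x) x
    = \<phi> x * real_cond_exp M F g x + real_cond_exp M F h x"
proof -
  have [measurable]: "\<phi> \<in> borel_measurable M" by (rule measurable_from_subalg[OF subalg \<phi>])
  have gh[measurable]: "g \<in> borel_measurable M" "h \<in> borel_measurable M" using g h by auto
  define B where "B k = {x \<in> space M. \<bar>\<phi> x\<bar> \<le> real k}" for k :: nat
  have BF: "B k \<in> sets F" for k
  proof -
    note \<phi>[measurable]
    have "{x \<in> space F. \<bar>\<phi> x\<bar> \<le> real k} \<in> sets F" by measurable
    moreover have "space F = space M" using subalg by (simp add: subalgebra_def)
    ultimately show ?thesis by (simp add: B_def)
  qed
  have BM[measurable]: "B k \<in> sets M" for k using BF[of k] subalg by (meson subalgebra_def subsetD)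
  have local: "AE x in M. indicator (B k) x * real_cond_exp M F (\<lambda>x. \<phi> x * g x + h x) x
      = indicator (B k) x * (\<phi> x * real_cond_exp M F g x + real_cond_exp M F h x)" for k
  proof -
    have BF_meas[measurable]: "(\<lambda>x. indicator (B k) x * \<phi> x) \<in> borel_measurable F"
      "(\<lambda>x. indicator (B k) x :: real) \<in> borel_measurable F"
      using BF[of k] \<phi> by measurable
    have int_\<phi>g: "integrable M (\<lambda>x. (indicator (B k) x * \<phi> x) * g x)"
      by (rule integrable_mult_bounded[OF g, where C="real k"]) (auto simp: B_def indicator_def)
    have int_h: "integrable M (\<lambda>x. indicator (B k) x * h x)"
      using integrable_mult_indicator[OF BM h] by simp
    have "AE x in M. real_cond_exp M F (\<lambda>x. indicator (B k) x * (\<phi> x * g x + h x)) x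
        = indicator (B k) x * real_cond_exp M F (\<lambda>x. \<phi> x * g x + h x) x"
      by (rule real_cond_exp_indicator_mult[OF _ BF]) measurable
    moreover have "AE x in M. real_cond_exp M F (\<lambda>x. indicator (B k) x * (\<phi> x * g x + h x)) x
        = real_cond_exp M F (\<lambda>x. (indicator (B k) x * \<phi> x) * g x + indicator (B k) x * h x) x"
      by (rule real_cond_exp_cong) (auto simp: algebra_simps)
    moreover note real_cond_exp_add[OF int_\<phi>g int_h]
      real_cond_exp_mult[OF BF_meas(1) gh(1) int_\<phi>g] real_cond_exp_mult[OF BF_meas(2) gh(2) int_h]
    ultimately show ?thesis by eventually_elim (simp add: algebra_simps)
  qed
  have "AE x in M. \<forall>k. indicator (B k) x * real_cond_exp M F (\<lambda>x. \<phi> x * g x + h x) x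
      = indicator (B k) x * (\<phi> x * real_cond_exp M F g x + real_cond_exp M F h x)"
    by (simp only: AE_all_countable) (use local in blast)
  with AE_space show ?thesis
  proof eventually_elim
    case (elim x)
    obtain k :: nat where "\<bar>\<phi> x\<bar> \<le> real k" using real_arch_simple by blast
    with elim show ?case by (auto simp: B_def dest: spec[of _ k])
  qed
qed

lemma real_cond_exp_eqI:
  assumes "\<And>B. B \<in> sets F \<Longrightarrow> (\<integral>x. indicator B x * f x \<partial>M) = (\<integral>x. indicator B x * g x \<partial>M)"
    and "integrable M f" "integrable M g" "g \<in> borel_measurable F"
  shows "AE x in M. real_cond_exp M F f x = g x"
  by (rule real_cond_exp_charact) (use assms in \<open>auto simp: set_lebesgue_integral_def\<close>)

lemma integral_mult_real_cond_exp_AE: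
  assumes f[measurable]: "f \<in> borel_measurable F" and g[measurable]: "g \<in> borel_measurable M"
    and fg: "integrable M (\<lambda>x. f x * g x)"
    and ce: "AE x in M. real_cond_exp M F g x = c x" and [measurable]: "c \<in> borel_measurable M"
  shows "integrable M (\<lambda>x. f x * c x)" "(\<integral>x. f x * g x \<partial>M) = (\<integral>x. f x * c x \<partial>M)"
proof -
  have [measurable]: "f \<in> borel_measurable M" by (rule measurable_from_subalg[OF subalg]) measurable
  have ae: "AE x in M. f x * real_cond_exp M F g x = f x * c x" using ce by eventually_elim simp
  show "integrable M (\<lambda>x. f x * c x)"
    by (rule integrable_cong_AE_imp[OF real_cond_exp_intg(1)[OF fg f g] _ ae]) measurable
  have "(\<integral>x. f x * g x \<partial>M) = (\<integral>x. f x * real_cond_exp M F g x \<partial>M)"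
    by (rule real_cond_exp_intg(2)[OF fg, symmetric]) measurable
  also have "\<dots> = (\<integral>x. f x * c x \<partial>M)"
    by (rule integral_cong_AE) (use ae in measurable)
  finally show "(\<integral>x. f x * g x \<partial>M) = (\<integral>x. f x * c x \<partial>M)" .
qed

lemma AE_notin_of_real_cond_exp_pos:
  assumes B: "B \<in> sets F" and g: "integrable M g" "\<And>x. x \<in> space M \<Longrightarrow> 0 \<le> g x"
    and vanish: "AE x in M. x \<in> B \<longrightarrow> g x = 0" and pos: "AE x in M. 0 < real_cond_exp M F g x"
  shows "AE x in M. x \<notin> B"
proof -
  have BM: "B \<in> sets M" using B subalg by (meson subalgebra_def subsetD)
  have int_B: "integrable M (\<lambda>x. indicator B x * real_cond_exp M F g x)"
    using integrable_mult_indicator[OF BM real_cond_exp_int(1)[OF g(1)]] by simp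
  have "(\<integral>x. indicator B x * real_cond_exp M F g x \<partial>M) = (\<integral>x. indicator B x * g x \<partial>M)"
    by (rule real_cond_exp_intg(2)) (use B g BM integrable_mult_indicator[OF BM g(1)] in auto)
  also have "\<dots> = 0"
    by (rule integral_eq_zero_AE) (use vanish in \<open>auto simp: indicator_def\<close>)
  finally have "AE x in M. indicator B x * real_cond_exp M F g x = 0"
    using integral_nonneg_eq_0_iff_AE[OF int_B] pos
    by (simp add: eventually_mono less_imp_le)
  with pos show ?thesis by eventually_elim (auto simp: indicator_def)
qed

end

lemma cond_indep_set_integral:
  fixes X :: "'w \<Rightarrow> 'x::topological_space" and W ew :: "'w \<Rightarrow> real" and \<phi> :: "'z \<Rightarrow> real"
  assumes N: "prob_space N" and X: "X \<in> borel_measurable N" and Z: "Z \<in> measurable N MZ"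
    and W: "W \<in> borel_measurable N" "\<forall>w\<in>space N. W w \<in> {0, 1}"
    and indep: "cond_indep N MZ Z borel W borel X"
    and ew: "ew \<in> borel_measurable (sigma_of N borel X)" "\<And>w. 0 \<le> ew w \<and> ew w \<le> 1"
      "AE w in N. real_cond_exp N (sigma_of N borel X) W w = ew w"
    and \<phi>: "\<phi> \<in> borel_measurable MZ" and B: "B \<in> sets (sigma_of N borel X)"
  shows "(\<integral>w. indicator B w * W w * \<phi> (Z w) \<partial>N) = (\<integral>w. indicator B w * ew w * \<phi> (Z w) \<partial>N)"
proof -
  interpret prob_space N by fact
  let ?F = "sigma_of N borel X"
  interpret sigma_finite_subalgebra N ?F using sigma_finite_subalgebra_sigma_of[OF N X] .
  have [measurable]: "ew \<in> borel_measurable N" by (rule measurable_from_subalg[OF subalg ew(1)])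
  have [measurable]: "B \<in> sets N" using B subalg by (meson subalgebra_def subsetD)
  have BF[measurable]: "indicator B \<in> borel_measurable ?F" using B by simp
  have [measurable]: "(\<lambda>w. indicator B w * ew w) \<in> borel_measurable ?F" "W \<in> borel_measurable N"
    using B ew(1) W(1) by measurable
  have indicator_eq: "(\<integral>w. indicator B w * W w * indicator S (Z w) \<partial>N)
      = (\<integral>w. indicator B w * ew w * indicator S (Z w) \<partial>N)" if S: "S \<in> sets MZ" for S
  proof -
    have [measurable]: "(\<lambda>u. indicator S (Z u) :: real) \<in> borel_measurable N" using Z S by measurable
    have W_eq: "\<And>u. u \<in> space N \<Longrightarrow> indicator {1} (W u) = W u" using W(2) by (auto simp: indicator_def)
    have "AE w in N. real_cond_exp N ?F (\<lambda>u. indicator S (Z u) * indicator {1} (W u)) w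
        = real_cond_exp N ?F (\<lambda>u. indicator S (Z u)) w * real_cond_exp N ?F (\<lambda>u. indicator {1} (W u)) w"
      using indep S unfolding cond_indep_def by auto
    moreover have "AE w in N. real_cond_exp N ?F (\<lambda>u. indicator {1} (W u)) w = real_cond_exp N ?F W w"
      by (rule real_cond_exp_cong) (auto simp: W_eq)
    moreover have "AE w in N. real_cond_exp N ?F (\<lambda>u. indicator S (Z u) * indicator {1} (W u)) w
        = real_cond_exp N ?F (\<lambda>u. W u * indicator S (Z u)) w"
      by (rule real_cond_exp_cong) (auto simp: W_eq)
    ultimately have ce: "AE w in N. real_cond_exp N ?F (\<lambda>u. W u * indicator S (Z u)) w
        = ew w * real_cond_exp N ?F (\<lambda>u. indicator S (Z u)) w"
      using ew(3) by eventually_elim simp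
    have bounded: "integrable N (\<lambda>w. f w * indicator S (Z w))"
      if "f \<in> borel_measurable N" "\<And>w. w \<in> space N \<Longrightarrow> \<bar>f w\<bar> \<le> 1" for f :: "'w \<Rightarrow> real"
    proof (rule integrable_const_bound[where B=1])
      show "(\<lambda>w. f w * indicator S (Z w)) \<in> borel_measurable N" using that(1) by measurable
    qed (use that(2) in \<open>auto simp: indicator_def\<close>)
    have int_ew: "integrable N (\<lambda>w. (indicator B w * ew w) * indicator S (Z w))"
      by (rule bounded) (measurable, use ew(2) in \<open>auto simp: indicator_def\<close>)
    have "integrable N (\<lambda>w. (indicator B w * W w) * indicator S (Z w))"
      by (rule bounded) (measurable, use W(2) in \<open>auto simp: indicator_def\<close>)
    then have "(\<integral>w. indicator B w * (W w * indicator S (Z w)) \<partial>N)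
        = (\<integral>w. indicator B w * (ew w * real_cond_exp N ?F (\<lambda>u. indicator S (Z u)) w) \<partial>N)"
      by (intro integral_mult_real_cond_exp_AE(2)[OF BF _ _ ce]) (simp_all add: mult.assoc)
    also have "\<dots> = (\<integral>w. (indicator B w * ew w) * real_cond_exp N ?F (\<lambda>u. indicator S (Z u)) w \<partial>N)"
      by (simp add: mult.assoc)
    also have "\<dots> = (\<integral>w. indicator B w * ew w * indicator S (Z w) \<partial>N)"
      by (rule real_cond_exp_intg(2)[OF int_ew]) measurable
    finally show ?thesis by (simp add: mult.assoc)
  qed
  show ?thesis
    by (rule integral_weighted_eq_of_indicators[OF Z \<phi>])
       (use indicator_eq W ew(2) in \<open>auto simp: indicator_def\<close>)
qed

text \<open>Bayes' rule \<open>E[Y | X, E] = E[1\<^sub>E Y | X] / P(E | X)\<close>, in multiplicative form.\<close>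

lemma (in prob_space) is_cond_exp_fn_cond_onD:
  fixes X :: "'a \<Rightarrow> 'x::topological_space"
  assumes X[measurable]: "X \<in> borel_measurable M" and P[measurable]: "Measurable.pred M P"
    and pos: "0 < prob {w \<in> space M. P w}" and Y: "integrable M Y"
    and mu: "is_cond_exp_fn (cond_on M P) X Y mu"
  shows "AE w in M. real_cond_exp M (sigma_of M borel X) (\<lambda>w. indicator {w \<in> space M. P w} w * Y w) w
    = mu (X w) * real_cond_exp M (sigma_of M borel X) (indicator {w \<in> space M. P w}) w"
proof -
  let ?E = "{w \<in> space M. P w}" and ?N = "cond_on M P" and ?F = "sigma_of M borel X"
  have [measurable]: "?E \<in> sets M" by measurable
  have N: "?N = uniform_measure M ?E" by (simp add: cond_on_def)
  have sigma_N: "sigma_of ?N borel X = ?F" by (simp add: N)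
  have [measurable_cong]: "sets ?N = sets M" and [simp]: "space ?N = space M"
    by (simp_all add: cond_on_def)
  have "prob_space ?N"
    unfolding N by (rule prob_space_uniform_measure) (use pos in \<open>auto simp: emeasure_eq_measure\<close>)
  then interpret NF: sigma_finite_subalgebra ?N ?F
    using sigma_finite_subalgebra_sigma_of[of ?N X] by (simp add: sigma_N)
  interpret MF: sigma_finite_subalgebra M ?F by (rule sigma_finite_subalgebra_sigma_of) (simp_all add: prob_space_axioms)
  have [measurable]: "mu \<in> borel_measurable borel" using mu by (simp add: is_cond_exp_fn_def)
  have muF[measurable]: "(\<lambda>w. mu (X w)) \<in> borel_measurable ?F" by (rule measurable_sigma_of_comp) simp
  have [measurable]: "Y \<in> borel_measurable M" using Y by auto
  have muN: "AE w in ?N. real_cond_exp ?N ?F Y w = mu (X w)"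
    using mu unfolding is_cond_exp_fn_def sigma_N by (auto elim: eventually_mono)
  have integral_N: "integral\<^sup>L ?N f = (\<integral>w. indicator ?E w * f w \<partial>M) / prob ?E"
    and integrable_N: "integrable ?N f \<longleftrightarrow> integrable M (\<lambda>w. indicator ?E w * f w)"
    if "f \<in> borel_measurable M" for f
    unfolding N using integral_uniform_measure integrable_uniform_measure_iff pos that by simp_all
  have int_YN: "integrable ?N Y"
    by (subst integrable_N) (auto intro!: integrable_mult_bounded[OF Y, where C=1] simp: indicator_def)
  have "integrable ?N (\<lambda>w. mu (X w))"
    by (rule integrable_cong_AE_imp[OF NF.real_cond_exp_int(1)[OF int_YN] _ muN]) measurable
  then have int_muE: "integrable M (\<lambda>w. mu (X w) * indicator ?E w)"
    by (subst (asm) integrable_N) (simp_all add: mult.commute)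
  show ?thesis
  proof (rule MF.real_cond_exp_eqI)
    show "integrable M (\<lambda>w. indicator ?E w * Y w)" using integrable_mult_indicator[OF _ Y, of ?E] by simp
    show "integrable M (\<lambda>w. mu (X w) * real_cond_exp M ?F (indicator ?E) w)"
      by (rule MF.real_cond_exp_intg(1)[OF int_muE]) measurable
    show "(\<lambda>w. mu (X w) * real_cond_exp M ?F (indicator ?E) w) \<in> borel_measurable ?F" by measurable
    fix B assume B: "B \<in> sets ?F"
    have BM[measurable]: "B \<in> sets M" using B MF.subalg by (meson subalgebra_def subsetD)
    have BF[measurable]: "(\<lambda>w. indicator B w :: real) \<in> borel_measurable ?F" using B by measurable
    have int_BY: "integrable ?N (\<lambda>w. indicator B w * Y w)"
      by (rule integrable_mult_bounded[OF int_YN, where C=1]) (auto simp: indicator_def)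
    have "(\<integral>w. indicator B w * (indicator ?E w * Y w) \<partial>M) = prob ?E * (\<integral>w. indicator B w * Y w \<partial>?N)"
      using pos by (simp add: integral_N ac_simps)
    also have "\<dots> = prob ?E * (\<integral>w. indicator B w * mu (X w) \<partial>?N)"
      using NF.integral_mult_real_cond_exp_AE(2)[OF _ _ _ muN] int_BY by simp
    also have "\<dots> = (\<integral>w. (indicator B w * mu (X w)) * indicator ?E w \<partial>M)"
      using pos by (simp add: integral_N ac_simps)
    also have "\<dots> = (\<integral>w. (indicator B w * mu (X w)) * real_cond_exp M ?F (indicator ?E) w \<partial>M)"
    proof (rule MF.real_cond_exp_intg(2)[symmetric])
      have "integrable M (\<lambda>w. indicator B w * (mu (X w) * indicator ?E w))"
        by (rule integrable_mult_bounded[OF int_muE borel_measurable_indicator[OF BM], where C=1])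
           (simp add: indicator_def)
      then show "integrable M (\<lambda>w. (indicator B w * mu (X w)) * indicator ?E w)"
        by (simp add: ac_simps)
    qed measurable
    finally show "(\<integral>w. indicator B w * (indicator ?E w * Y w) \<partial>M)
        = (\<integral>w. indicator B w * (mu (X w) * real_cond_exp M ?F (indicator ?E) w) \<partial>M)"
      by (simp add: ac_simps)
  qed
qed

section \<open>The source and target populations\<close>

locale transport_model =
  fixes M :: "'w measure" and X :: "'w \<Rightarrow> 'x::topological_space" and G A Y0 Y1 Y :: "'w \<Rightarrow> real"
    and mu0 mu1 e1 s :: "'x \<Rightarrow> real" and q :: real
  assumes M: "prob_space M"
    and meas: "X \<in> borel_measurable M" "G \<in> borel_measurable M" "A \<in> borel_measurable M"
              "Y0 \<in> borel_measurable M" "Y1 \<in> borel_measurable M"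
    and binary: "\<forall>w\<in>space M. G w \<in> {0, 1} \<and> A w \<in> {0, 1}"
    and consistency: "\<forall>w\<in>space M. Y w = A w * Y1 w + (1 - A w) * Y0 w"
    and int_Y: "integrable M Y0" "integrable M Y1"
    and q_def: "q = measure M {w \<in> space M. G w = 1}"
    and q_bounds: "0 < q" "q < 1"
    and e1_def: "is_cond_exp_fn (cond_on M (\<lambda>w. G w = 1)) X A e1"
    and s_def: "is_cond_exp_fn M X G s"
    and mu1_def: "is_cond_exp_fn (cond_on M (\<lambda>w. A w = 1 \<and> G w = 1)) X Y mu1"
    and mu0_def: "is_cond_exp_fn (cond_on M (\<lambda>w. A w = 0 \<and> G w = 1)) X Y mu0"
    and A1_indep: "cond_indep (cond_on M (\<lambda>w. G w = 1)) borel (\<lambda>w. (Y1 w, Y0 w)) borel A borel X"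
    and A1_pos: "AE w in M. G w = 1 \<longrightarrow> 0 < e1 (X w) \<and> e1 (X w) < 1"
    and A2_indep: "cond_indep M borel (\<lambda>w. (Y0 w, Y1 w)) borel G borel X"
    and A2_pos: "AE w in M. 0 < s (X w) \<and> s (X w) < 1"

sublocale transport_model \<subseteq> prob_space M by (rule M)

sublocale transport_model \<subseteq> FX: sigma_finite_subalgebra M "sigma_of M borel X"
  by (rule sigma_finite_subalgebra_sigma_of[OF M meas(1)])

context transport_model
begin

abbreviation "FX \<equiv> sigma_of M borel X"
abbreviation "EY0 \<equiv> real_cond_exp M FX Y0"
abbreviation "EY1 \<equiv> real_cond_exp M FX Y1"

text \<open>Versions of \<open>s(X)\<close> and \<open>e\<^sub>1(X)\<close> clipped to \<open>[0, 1]\<close>: they are bounded and \<open>FX\<close>-measurable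
  everywhere and agree with \<open>s(X)\<close> and \<open>e\<^sub>1(X)\<close> almost surely.\<close>

definition sX :: "'w \<Rightarrow> real" where "sX = (\<lambda>w. max 0 (min 1 (s (X w))))"
definition eX :: "'w \<Rightarrow> real" where "eX = (\<lambda>w. max 0 (min 1 (e1 (X w))))"

lemmas [measurable] = meas

lemma Y_measurable [measurable]: "Y \<in> borel_measurable M"
proof -
  have "(\<lambda>w. A w * Y1 w + (1 - A w) * Y0 w) \<in> borel_measurable M" by measurable
  then show ?thesis by (rule measurable_cong[THEN iffD1, rotated]) (use consistency in auto)
qed

lemma integrable_Y: "integrable M Y"
proof -
  have "integrable M (\<lambda>w. A w * Y1 w + (1 - A w) * Y0 w)"
    by (intro Bochner_Integration.integrable_add integrable_mult_bounded[where C=1] int_Y)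
       (use binary in auto)
  then show ?thesis by (rule Bochner_Integration.integrable_cong[THEN iffD1, rotated 2]) (use consistency in auto)
qed

lemma A_cases: "w \<in> space M \<Longrightarrow> A w = 0 \<or> A w = 1"
  using binary by auto

lemma sets_FX: "B \<in> sets FX \<Longrightarrow> B \<in> sets M"
  using FX.subalg by (meson subalgebra_def subsetD)

lemma measurable_FX_M: "f \<in> borel_measurable FX \<Longrightarrow> f \<in> borel_measurable M"
  by (rule measurable_from_subalg[OF FX.subalg])

lemma nuisance_measurable [measurable]:
  "s \<in> borel_measurable borel" "e1 \<in> borel_measurable borel"
  "mu1 \<in> borel_measurable borel" "mu0 \<in> borel_measurable borel"
  using s_def e1_def mu1_def mu0_def by (auto simp: is_cond_exp_fn_def)

lemma sX_FX [measurable]: "sX \<in> borel_measurable FX"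
  and eX_FX [measurable]: "eX \<in> borel_measurable FX"
  unfolding sX_def eX_def by (rule measurable_sigma_of_comp; measurable)+

lemma sX_M [measurable]: "sX \<in> borel_measurable M"
  and eX_M [measurable]: "eX \<in> borel_measurable M"
  by (rule measurable_FX_M[OF sX_FX], rule measurable_FX_M[OF eX_FX])

lemma sX_bounds: "0 \<le> sX w" "sX w \<le> 1"
  and eX_bounds: "0 \<le> eX w" "eX w \<le> 1"
  by (simp_all add: sX_def eX_def)

lemma sX_eq: "AE w in M. sX w = s (X w) \<and> 0 < sX w \<and> sX w < 1"
  using A2_pos by eventually_elim (auto simp: sX_def)

lemma cond_exp_one: "AE w in M. real_cond_exp M FX (\<lambda>w. 1) w = 1"
  by (rule FX.real_cond_exp_F_meas) auto

lemma cond_exp_G: "AE w in M. real_cond_exp M FX G w = sX w"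
  using s_def sX_eq unfolding is_cond_exp_fn_def by (auto elim: eventually_mono)

lemma cond_exp_G_mult:
  fixes \<phi> :: "real \<times> real \<Rightarrow> real"
  assumes \<phi>[measurable]: "\<phi> \<in> borel_measurable borel" and int: "integrable M (\<lambda>w. \<phi> (Y0 w, Y1 w))"
  shows "AE w in M. real_cond_exp M FX (\<lambda>w. G w * \<phi> (Y0 w, Y1 w)) w
    = sX w * real_cond_exp M FX (\<lambda>w. \<phi> (Y0 w, Y1 w)) w"
proof (rule FX.real_cond_exp_eqI)
  let ?Z = "\<lambda>w. \<phi> (Y0 w, Y1 w)"
  show "integrable M (\<lambda>w. G w * ?Z w)"
    by (rule integrable_mult_bounded[where C=1, OF int]) (use binary in auto)
  show "integrable M (\<lambda>w. sX w * real_cond_exp M FX ?Z w)"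
    by (rule integrable_mult_bounded[where C=1, OF FX.real_cond_exp_int(1)[OF int]])
       (use sX_bounds in auto)
  show "(\<lambda>w. sX w * real_cond_exp M FX ?Z w) \<in> borel_measurable FX" by measurable
  fix B assume B: "B \<in> sets FX"
  have [measurable]: "B \<in> sets M" by (rule sets_FX[OF B])
  have "(\<integral>w. indicator B w * G w * ?Z w \<partial>M) = (\<integral>w. indicator B w * sX w * ?Z w \<partial>M)"
    by (rule cond_indep_set_integral[OF M meas(1) _ meas(2) _ A2_indep sX_FX _ cond_exp_G \<phi> B])
       (use binary sX_bounds in auto)
  also have "\<dots> = (\<integral>w. (indicator B w * sX w) * real_cond_exp M FX ?Z w \<partial>M)"
    by (rule FX.real_cond_exp_intg(2)[symmetric])
       (use B in \<open>auto intro!: integrable_mult_bounded[where C=1, OF int] simp: indicator_def sX_bounds\<close>)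
  finally show "(\<integral>w. indicator B w * (G w * ?Z w) \<partial>M)
      = (\<integral>w. indicator B w * (sX w * real_cond_exp M FX ?Z w) \<partial>M)"
    by (simp add: ac_simps)
qed

lemma cond_exp_not_G_mult:
  fixes \<phi> :: "real \<times> real \<Rightarrow> real"
  assumes \<phi>: "\<phi> \<in> borel_measurable borel" and int: "integrable M (\<lambda>w. \<phi> (Y0 w, Y1 w))"
  shows "AE w in M. real_cond_exp M FX (\<lambda>w. (1 - G w) * \<phi> (Y0 w, Y1 w)) w
    = (1 - sX w) * real_cond_exp M FX (\<lambda>w. \<phi> (Y0 w, Y1 w)) w"
proof -
  have "integrable M (\<lambda>w. G w * \<phi> (Y0 w, Y1 w))"
    by (rule integrable_mult_bounded[where C=1, OF int]) (use binary in auto)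
  from FX.real_cond_exp_diff[OF int this] cond_exp_G_mult[OF \<phi> int]
  show ?thesis by eventually_elim (simp add: algebra_simps)
qed

text \<open>Positivity of \<open>e\<^sub>1\<close> is assumed only on the source population; it holds on all of \<open>M\<close>
  because \<open>P(G = 1 | X) = s(X) > 0\<close>.\<close>

lemma e1_pos: "AE w in M. 0 < e1 (X w) \<and> e1 (X w) < 1"
proof -
  let ?B = "{w \<in> space M. \<not> (0 < e1 (X w) \<and> e1 (X w) < 1)}"
  have [measurable]: "(\<lambda>w. e1 (X w)) \<in> borel_measurable FX" by (rule measurable_sigma_of_comp) simp
  have "{w \<in> space FX. \<not> (0 < e1 (X w) \<and> e1 (X w) < 1)} \<in> sets FX" by measurable
  then have B: "?B \<in> sets FX" by (simp add: sigma_of_def)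
  have "integrable M G" by (intro integrable_const_bound[where B=1] AE_I2) (use binary in auto)
  then have "AE w in M. w \<notin> ?B"
    by (rule FX.AE_notin_of_real_cond_exp_pos[OF B])
       (use binary A1_pos cond_exp_G sX_eq in \<open>auto elim: eventually_mono\<close>)
  then show ?thesis by (auto elim: eventually_mono)
qed

lemma eX_eq: "AE w in M. eX w = e1 (X w) \<and> 0 < eX w \<and> eX w < 1"
  using e1_pos by eventually_elim (auto simp: eX_def)

abbreviation "N1 \<equiv> cond_on M (\<lambda>w. G w = 1)"

lemma
  shows N1_uniform: "N1 = uniform_measure M {w \<in> space M. G w = 1}"
    and sets_N1 [measurable_cong]: "sets N1 = sets M" and space_N1 [simp]: "space N1 = space M"
    and sigma_of_N1 [simp]: "sigma_of N1 borel X = FX"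
  by (simp_all add: cond_on_def)

lemma prob_space_N1: "prob_space N1"
  unfolding N1_uniform
  by (rule prob_space_uniform_measure) (use q_def q_bounds in \<open>auto simp: emeasure_eq_measure\<close>)

lemma integral_N1:
  assumes [measurable]: "f \<in> borel_measurable M"
  shows "integral\<^sup>L N1 f = (\<integral>w. G w * f w \<partial>M) / q"
proof -
  have "(\<integral>w. indicator {w \<in> space M. G w = 1} w * f w \<partial>M) = (\<integral>w. G w * f w \<partial>M)"
    by (rule Bochner_Integration.integral_cong) (use binary in \<open>auto simp: indicator_def\<close>)
  then show ?thesis
    unfolding N1_uniform using integral_uniform_measure[of "{w \<in> space M. G w = 1}" f] q_def q_bounds
    by simp
qed

lemma cond_exp_A_N1: "AE w in N1. real_cond_exp N1 FX A w = eX w"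
proof -
  have "AE w in N1. 0 < e1 (X w) \<and> e1 (X w) < 1"
    unfolding N1_uniform using A1_pos q_def q_bounds
    by (subst AE_uniform_measure) (auto simp: emeasure_eq_measure)
  with e1_def show ?thesis
    unfolding is_cond_exp_fn_def by (auto simp: eX_def elim: eventually_mono)
qed

text \<open>Assumption (A1) holds under \<open>M( \<cdot> | G = 1)\<close>; multiplying by \<open>G\<close> transports it to \<open>M\<close>.\<close>

lemma set_integral_GA:
  fixes \<phi> :: "real \<times> real \<Rightarrow> real"
  assumes \<phi>[measurable]: "\<phi> \<in> borel_measurable borel" and B: "B \<in> sets FX"
  shows "(\<integral>w. indicator B w * G w * A w * \<phi> (Y0 w, Y1 w) \<partial>M)
    = (\<integral>w. indicator B w * G w * eX w * \<phi> (Y0 w, Y1 w) \<partial>M)"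
proof -
  have [measurable]: "B \<in> sets M" by (rule sets_FX[OF B])
  have "(\<lambda>p::real \<times> real. (snd p, fst p)) \<in> borel_measurable borel"
    by (intro borel_measurable_continuous_onI continuous_intros)
  then have swap: "(\<lambda>p. \<phi> (snd p, fst p)) \<in> borel_measurable borel"
    using \<phi> by (rule measurable_compose)
  have "(\<integral>w. indicator B w * A w * \<phi> (snd (Y1 w, Y0 w), fst (Y1 w, Y0 w)) \<partial>N1)
      = (\<integral>w. indicator B w * eX w * \<phi> (snd (Y1 w, Y0 w), fst (Y1 w, Y0 w)) \<partial>N1)"
    by (rule cond_indep_set_integral[OF prob_space_N1, where X=X and Z="\<lambda>w. (Y1 w, Y0 w)"
          and \<phi>="\<lambda>p. \<phi> (snd p, fst p)", unfolded sigma_of_N1])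
       (use binary A1_indep cond_exp_A_N1 eX_FX eX_bounds B swap in simp_all)
  then show ?thesis using q_bounds by (simp add: integral_N1 ac_simps)
qed

lemma cond_exp_GA_mult:
  fixes \<phi> :: "real \<times> real \<Rightarrow> real"
  assumes \<phi>[measurable]: "\<phi> \<in> borel_measurable borel" and int: "integrable M (\<lambda>w. \<phi> (Y0 w, Y1 w))"
  shows "AE w in M. real_cond_exp M FX (\<lambda>w. G w * A w * \<phi> (Y0 w, Y1 w)) w
    = sX w * eX w * real_cond_exp M FX (\<lambda>w. \<phi> (Y0 w, Y1 w)) w"
proof (rule FX.real_cond_exp_eqI)
  let ?Z = "\<lambda>w. \<phi> (Y0 w, Y1 w)"
  show "integrable M (\<lambda>w. G w * A w * ?Z w)"
    by (rule integrable_mult_bounded[where C=1, OF int]) (use binary in auto)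
  show "integrable M (\<lambda>w. sX w * eX w * real_cond_exp M FX ?Z w)"
    by (rule integrable_mult_bounded[where C=1, OF FX.real_cond_exp_int(1)[OF int]])
       (use sX_bounds eX_bounds in \<open>auto simp: abs_mult intro: mult_le_one\<close>)
  show "(\<lambda>w. sX w * eX w * real_cond_exp M FX ?Z w) \<in> borel_measurable FX" by measurable
  fix B assume B: "B \<in> sets FX"
  have [measurable]: "B \<in> sets M" by (rule sets_FX[OF B])
  have int_BGZ: "integrable M (\<lambda>w. (indicator B w * eX w) * (G w * ?Z w))"
    by (rule integrable_mult_bounded[where C=1])
       (use int binary eX_bounds in \<open>auto intro!: integrable_mult_bounded[where C=1] simp: indicator_def\<close>)
  have "(\<integral>w. (indicator B w * eX w) * (G w * ?Z w) \<partial>M)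
      = (\<integral>w. (indicator B w * eX w) * (sX w * real_cond_exp M FX ?Z w) \<partial>M)"
    by (intro FX.integral_mult_real_cond_exp_AE(2)[OF _ _ int_BGZ cond_exp_G_mult[OF \<phi> int]])
       (use B in measurable)
  with set_integral_GA[OF \<phi> B]
  show "(\<integral>w. indicator B w * (G w * A w * ?Z w) \<partial>M)
      = (\<integral>w. indicator B w * (sX w * eX w * real_cond_exp M FX ?Z w) \<partial>M)"
    by (simp add: ac_simps)
qed

lemma cond_exp_G_not_A_mult:
  fixes \<phi> :: "real \<times> real \<Rightarrow> real"
  assumes \<phi>: "\<phi> \<in> borel_measurable borel" and int: "integrable M (\<lambda>w. \<phi> (Y0 w, Y1 w))"
  shows "AE w in M. real_cond_exp M FX (\<lambda>w. G w * (1 - A w) * \<phi> (Y0 w, Y1 w)) w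
    = sX w * (1 - eX w) * real_cond_exp M FX (\<lambda>w. \<phi> (Y0 w, Y1 w)) w"
proof -
  have "integrable M (\<lambda>w. G w * \<phi> (Y0 w, Y1 w))" "integrable M (\<lambda>w. G w * A w * \<phi> (Y0 w, Y1 w))"
    by (rule integrable_mult_bounded[where C=1, OF int]; use binary in auto)+
  from FX.real_cond_exp_diff[OF this] cond_exp_G_mult[OF \<phi> int] cond_exp_GA_mult[OF \<phi> int]
  show ?thesis by eventually_elim (simp add: algebra_simps)
qed

lemma
  shows cond_exp_not_G: "AE w in M. real_cond_exp M FX (\<lambda>w. 1 - G w) w = 1 - sX w"
    and cond_exp_not_G_Y0: "AE w in M. real_cond_exp M FX (\<lambda>w. (1 - G w) * Y0 w) w = (1 - sX w) * EY0 w"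
    and cond_exp_not_G_Y1: "AE w in M. real_cond_exp M FX (\<lambda>w. (1 - G w) * Y1 w) w = (1 - sX w) * EY1 w"
    and cond_exp_GA: "AE w in M. real_cond_exp M FX (\<lambda>w. G w * A w) w = sX w * eX w"
    and cond_exp_GA_Y1: "AE w in M. real_cond_exp M FX (\<lambda>w. G w * A w * Y1 w) w = sX w * eX w * EY1 w"
    and cond_exp_G_not_A: "AE w in M. real_cond_exp M FX (\<lambda>w. G w * (1 - A w)) w = sX w * (1 - eX w)"
    and cond_exp_G_not_A_Y0:
      "AE w in M. real_cond_exp M FX (\<lambda>w. G w * (1 - A w) * Y0 w) w = sX w * (1 - eX w) * EY0 w"
proof -
  have [measurable]: "(fst :: real \<times> real \<Rightarrow> real) \<in> borel_measurable borel"
    "(snd :: real \<times> real \<Rightarrow> real) \<in> borel_measurable borel"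
    by (intro borel_measurable_continuous_onI continuous_intros)+
  have one: "integrable M (\<lambda>w. (\<lambda>_. 1 :: real) (Y0 w, Y1 w))" by simp
  show "AE w in M. real_cond_exp M FX (\<lambda>w. 1 - G w) w = 1 - sX w"
    using cond_exp_not_G_mult[OF borel_measurable_const one] cond_exp_one by eventually_elim simp
  show "AE w in M. real_cond_exp M FX (\<lambda>w. G w * A w) w = sX w * eX w"
    using cond_exp_GA_mult[OF borel_measurable_const one] cond_exp_one by eventually_elim simp
  show "AE w in M. real_cond_exp M FX (\<lambda>w. G w * (1 - A w)) w = sX w * (1 - eX w)"
    using cond_exp_G_not_A_mult[OF borel_measurable_const one] cond_exp_one by eventually_elim simp
  show "AE w in M. real_cond_exp M FX (\<lambda>w. (1 - G w) * Y0 w) w = (1 - sX w) * EY0 w"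
    using cond_exp_not_G_mult[of fst] int_Y by simp
  show "AE w in M. real_cond_exp M FX (\<lambda>w. (1 - G w) * Y1 w) w = (1 - sX w) * EY1 w"
    using cond_exp_not_G_mult[of snd] int_Y by simp
  show "AE w in M. real_cond_exp M FX (\<lambda>w. G w * A w * Y1 w) w = sX w * eX w * EY1 w"
    using cond_exp_GA_mult[of snd] int_Y by simp
  show "AE w in M. real_cond_exp M FX (\<lambda>w. G w * (1 - A w) * Y0 w) w = sX w * (1 - eX w) * EY0 w"
    using cond_exp_G_not_A_mult[of fst] int_Y by simp
qed

lemma regression_eq_cond_exp:
  assumes P[measurable]: "Measurable.pred M P"
    and H: "\<And>w. w \<in> space M \<Longrightarrow> indicator {w \<in> space M. P w} w = H w"
    and HY: "\<And>w. w \<in> space M \<Longrightarrow> H w * Y w = H w * Yj w" and Yj: "integrable M Yj"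
    and mu: "is_cond_exp_fn (cond_on M P) X Y mu"
    and pos: "AE w in M. 0 < real_cond_exp M FX H w"
    and mult: "AE w in M. real_cond_exp M FX (\<lambda>w. H w * Yj w) w
      = real_cond_exp M FX H w * real_cond_exp M FX Yj w"
  shows "AE w in M. mu (X w) = real_cond_exp M FX Yj w"
proof -
  let ?E = "{w \<in> space M. P w}"
  have [measurable]: "?E \<in> sets M" by measurable
  have "indicator ?E \<in> borel_measurable M" by measurable
  then have [measurable]: "H \<in> borel_measurable M"
    by (rule measurable_cong[THEN iffD1, rotated]) (use H in auto)
  have [measurable]: "Yj \<in> borel_measurable M" using Yj by auto
  have H_int: "integrable M H"
    by (intro integrable_const_bound[where B=1] AE_I2) (auto simp: H[symmetric] indicator_def)
  have "prob ?E = (\<integral>w. indicator ?E w \<partial>M)" by simp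
  also have "\<dots> = (\<integral>w. H w \<partial>M)" by (rule Bochner_Integration.integral_cong) (simp_all add: H)
  also have "\<dots> = (\<integral>w. real_cond_exp M FX H w \<partial>M)"
    by (rule FX.real_cond_exp_int(2)[OF H_int, symmetric])
  also have "\<dots> > 0"
    by (rule integral_pos_AE[OF FX.real_cond_exp_int(1)[OF H_int] pos])
  finally have "0 < prob ?E" .
  note bayes = is_cond_exp_fn_cond_onD[OF meas(1) P this integrable_Y mu]
  have "AE w in M. real_cond_exp M FX (\<lambda>w. indicator ?E w * Y w) w = real_cond_exp M FX (\<lambda>w. H w * Yj w) w"
    by (rule FX.real_cond_exp_cong) (use H HY in simp_all)
  moreover have "AE w in M. real_cond_exp M FX (indicator ?E) w = real_cond_exp M FX H w"
    by (rule FX.real_cond_exp_cong) (use H in simp_all)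
  ultimately show ?thesis using bayes pos mult
  proof eventually_elim
    case (elim w)
    then have "real_cond_exp M FX H w * (mu (X w) - real_cond_exp M FX Yj w) = 0"
      by (simp add: algebra_simps)
    with elim show ?case by simp
  qed
qed

lemma mu1_eq: "AE w in M. mu1 (X w) = EY1 w"
proof (rule regression_eq_cond_exp[OF _ _ _ int_Y(2) mu1_def])
  show "AE w in M. 0 < real_cond_exp M FX (\<lambda>w. G w * A w) w"
    using cond_exp_GA sX_eq eX_eq by eventually_elim simp
  show "AE w in M. real_cond_exp M FX (\<lambda>w. G w * A w * Y1 w) w
      = real_cond_exp M FX (\<lambda>w. G w * A w) w * EY1 w"
    using cond_exp_GA cond_exp_GA_Y1 by eventually_elim simp
qed (use binary consistency in \<open>auto simp: indicator_def\<close>)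

lemma mu0_eq: "AE w in M. mu0 (X w) = EY0 w"
proof (rule regression_eq_cond_exp[OF _ _ _ int_Y(1) mu0_def])
  show "AE w in M. 0 < real_cond_exp M FX (\<lambda>w. G w * (1 - A w)) w"
    using cond_exp_G_not_A sX_eq eX_eq by eventually_elim simp
  show "AE w in M. real_cond_exp M FX (\<lambda>w. G w * (1 - A w) * Y0 w) w
      = real_cond_exp M FX (\<lambda>w. G w * (1 - A w)) w * EY0 w"
    using cond_exp_G_not_A cond_exp_G_not_A_Y0 by eventually_elim simp
qed (use binary consistency in \<open>auto simp: indicator_def\<close>)

lemma policy_value_eq:
  assumes pol[measurable]: "pol \<in> borel_measurable borel" and pol_bin: "\<forall>x. pol x \<in> {0, 1}"
  shows "policy_value M X G Y0 Y1 pol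
    = (\<integral>w. (1 - sX w) * (pol (X w) * EY1 w + (1 - pol (X w)) * EY0 w) \<partial>M) / (1 - q)"
proof -
  let ?E0 = "{w \<in> space M. G w = 0}"
  have [measurable]: "?E0 \<in> sets M" by measurable
  have "?E0 = space M - {w \<in> space M. G w = 1}" using binary by auto
  then have prob_E0: "prob ?E0 = 1 - q"
    using prob_compl[of "{w \<in> space M. G w = 1}"] q_def by simp
  have polF: "(\<lambda>w. pol (X w)) \<in> borel_measurable FX" "(\<lambda>w. 1 - pol (X w)) \<in> borel_measurable FX"
    using measurable_sigma_of_comp[OF pol] by measurable
  have not_G_int: "integrable M (\<lambda>w. b w * ((1 - G w) * Yj w))"
    if "b \<in> borel_measurable M" "\<And>w. \<bar>b w\<bar> \<le> 1" "integrable M Yj" for b Yj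
    by (intro integrable_mult_bounded[where C=1] that) (use binary in auto)
  have pol_bounds: "\<bar>pol x\<bar> \<le> 1" "\<bar>1 - pol x\<bar> \<le> 1" for x using pol_bin[rule_format, of x] by auto
  note int1 = not_G_int[of "\<lambda>w. pol (X w)", OF _ pol_bounds(1) int_Y(2)]
    and int0 = not_G_int[of "\<lambda>w. 1 - pol (X w)", OF _ pol_bounds(2) int_Y(1)]
  note E1 = FX.integral_mult_real_cond_exp_AE[OF polF(1) _ int1 cond_exp_not_G_Y1]
    and E0 = FX.integral_mult_real_cond_exp_AE[OF polF(2) _ int0 cond_exp_not_G_Y0]
  have "policy_value M X G Y0 Y1 pol
      = (\<integral>w. indicator ?E0 w * (pol (X w) * Y1 w + (1 - pol (X w)) * Y0 w) \<partial>M) / (1 - q)"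
    unfolding policy_value_def cond_on_def
    using integral_uniform_measure[of ?E0] prob_E0 q_bounds by simp
  also have "(\<integral>w. indicator ?E0 w * (pol (X w) * Y1 w + (1 - pol (X w)) * Y0 w) \<partial>M)
      = (\<integral>w. pol (X w) * ((1 - G w) * Y1 w) + (1 - pol (X w)) * ((1 - G w) * Y0 w) \<partial>M)"
    by (rule Bochner_Integration.integral_cong) (use binary in \<open>auto simp: indicator_def algebra_simps\<close>)
  also have "\<dots> = (\<integral>w. pol (X w) * ((1 - sX w) * EY1 w) + (1 - pol (X w)) * ((1 - sX w) * EY0 w) \<partial>M)"
    using int1 int0 E1 E0 by simp
  finally show ?thesis by (simp add: algebra_simps)
qed

lemma cond_exp_residual:
  assumes m: "m \<in> borel_measurable borel" and [measurable]: "Yj \<in> borel_measurable M"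
    and H: "integrable M H" and HY: "integrable M (\<lambda>w. H w * Yj w)"
    and r: "AE w in M. real_cond_exp M FX H w = r w"
    and rY: "AE w in M. real_cond_exp M FX (\<lambda>w. H w * Yj w) w = r w * real_cond_exp M FX Yj w"
  shows "AE w in M. real_cond_exp M FX (\<lambda>w. H w * (Yj w - m (X w))) w
    = r w * (real_cond_exp M FX Yj w - m (X w))"
proof -
  have mF: "(\<lambda>w. - m (X w)) \<in> borel_measurable FX" using measurable_sigma_of_comp[OF m] by measurable
  have [measurable]: "H \<in> borel_measurable M" "m \<in> borel_measurable borel" using H m by auto
  have "AE w in M. real_cond_exp M FX (\<lambda>w. H w * (Yj w - m (X w))) w
      = real_cond_exp M FX (\<lambda>w. - m (X w) * H w + H w * Yj w) w"
    by (rule FX.real_cond_exp_cong) (auto simp: algebra_simps)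
  with FX.real_cond_exp_mult_add[OF mF H HY] r rY show ?thesis
    by eventually_elim (simp add: algebra_simps)
qed

lemma integral_se_term:
  assumes pol[measurable]: "pol \<in> borel_measurable borel" and pol_bin: "\<forall>x. pol x \<in> {0, 1}"
    and est[measurable]: "mu0h \<in> borel_measurable borel" "mu1h \<in> borel_measurable borel"
      "eh \<in> borel_measurable borel" "sh \<in> borel_measurable borel"
    and int_terms:
      "integrable M (\<lambda>w. G w / (1 - q) * (pol (X w) * A w * (Y w - mu1h (X w)) / eh (X w))
                          * ((1 - sh (X w)) / sh (X w)))"
      "integrable M (\<lambda>w. G w / (1 - q) * ((1 - pol (X w)) * (1 - A w) * (Y w - mu0h (X w)) / (1 - eh (X w)))
                          * ((1 - sh (X w)) / sh (X w)))"
      "integrable M (\<lambda>w. (1 - G w) / (1 - q) * (pol (X w) * mu1h (X w) + (1 - pol (X w)) * mu0h (X w)))"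
    and correct: "(mu1h = mu1 \<and> mu0h = mu0) \<or> (eh = e1 \<and> sh = s)"
  shows "(\<integral>w. se_term q pol mu0h mu1h eh sh (X w, G w, A w, Y w) \<partial>M) = policy_value M X G Y0 Y1 pol"
proof -
  define w1 where "w1 = (\<lambda>w. pol (X w) / (1 - q) / eh (X w) * ((1 - sh (X w)) / sh (X w)))"
  define w0 where "w0 = (\<lambda>w. (1 - pol (X w)) / (1 - q) / (1 - eh (X w)) * ((1 - sh (X w)) / sh (X w)))"
  define k where "k = (\<lambda>w. (pol (X w) * mu1h (X w) + (1 - pol (X w)) * mu0h (X w)) / (1 - q))"
  have weights_FX: "w1 \<in> borel_measurable FX" "w0 \<in> borel_measurable FX" "k \<in> borel_measurable FX"
    unfolding w1_def w0_def k_def by (rule measurable_sigma_of_comp; measurable)+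
  have [measurable]: "w1 \<in> borel_measurable M" "w0 \<in> borel_measurable M" "k \<in> borel_measurable M"
    using weights_FX by (simp_all add: measurable_FX_M)
  define T1 where "T1 = (\<lambda>w. G w / (1 - q) * (pol (X w) * A w * (Y w - mu1h (X w)) / eh (X w))
    * ((1 - sh (X w)) / sh (X w)))"
  define T0 where "T0 = (\<lambda>w. G w / (1 - q) * ((1 - pol (X w)) * (1 - A w) * (Y w - mu0h (X w)) / (1 - eh (X w)))
    * ((1 - sh (X w)) / sh (X w)))"
  define T where "T = (\<lambda>w. (1 - G w) / (1 - q) * (pol (X w) * mu1h (X w) + (1 - pol (X w)) * mu0h (X w)))"
  have T1_eq: "T1 w = w1 w * (G w * A w * (Y1 w - mu1h (X w)))"
    and T0_eq: "T0 w = w0 w * (G w * (1 - A w) * (Y0 w - mu0h (X w)))"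
    if "w \<in> space M" for w
    using A_cases[OF that] consistency that by (auto simp: T1_def T0_def w1_def w0_def)
  have T_eq: "T = (\<lambda>w. k w * (1 - G w))" by (simp add: T_def k_def fun_eq_iff)
  have int1: "integrable M (\<lambda>w. w1 w * (G w * A w * (Y1 w - mu1h (X w))))"
    using int_terms(1)[folded T1_def] by (rule Bochner_Integration.integrable_cong[THEN iffD1, rotated 2])
      (simp_all add: T1_eq)
  have int0: "integrable M (\<lambda>w. w0 w * (G w * (1 - A w) * (Y0 w - mu0h (X w))))"
    using int_terms(2)[folded T0_def] by (rule Bochner_Integration.integrable_cong[THEN iffD1, rotated 2])
      (simp_all add: T0_eq)
  have intk: "integrable M (\<lambda>w. k w * (1 - G w))"
    using int_terms(3)[folded T_def] by (simp add: T_eq)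
  have int_H: "integrable M (\<lambda>w. G w * A w)" "integrable M (\<lambda>w. G w * (1 - A w))"
    by (intro integrable_const_bound[where B=1] AE_I2; use binary in auto)+
  have int_HY: "integrable M (\<lambda>w. G w * A w * Y1 w)" "integrable M (\<lambda>w. G w * (1 - A w) * Y0 w)"
    by (rule integrable_mult_bounded[where C=1, OF int_Y(2)] integrable_mult_bounded[where C=1, OF int_Y(1)];
        use binary in auto)+
  note res1 = cond_exp_residual[OF est(2) meas(5) int_H(1) int_HY(1) cond_exp_GA cond_exp_GA_Y1]
    and res0 = cond_exp_residual[OF est(1) meas(4) int_H(2) int_HY(2) cond_exp_G_not_A cond_exp_G_not_A_Y0]
  note E1 = FX.integral_mult_real_cond_exp_AE[OF weights_FX(1) _ int1 res1]
    and E0 = FX.integral_mult_real_cond_exp_AE[OF weights_FX(2) _ int0 res0]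
    and Ek = FX.integral_mult_real_cond_exp_AE[OF weights_FX(3) _ intk cond_exp_not_G]
  have ae: "AE w in M. w1 w * (sX w * eX w * (EY1 w - mu1h (X w)))
      + w0 w * (sX w * (1 - eX w) * (EY0 w - mu0h (X w))) + k w * (1 - sX w)
      = (1 - sX w) * (pol (X w) * EY1 w + (1 - pol (X w)) * EY0 w) / (1 - q)"
    using correct
  proof
    assume c: "mu1h = mu1 \<and> mu0h = mu0"
    from mu1_eq mu0_eq show ?thesis
      by eventually_elim (use c in \<open>simp add: k_def algebra_simps add_divide_distrib\<close>)
  next
    assume c: "eh = e1 \<and> sh = s"
    have cancel: "p / c / e * ((1 - t) / t) * (t * e * y) = p / c * (1 - t) * y"
      if "e \<noteq> 0" "t \<noteq> 0" "c \<noteq> 0" for p c e t y :: real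
      using that by (simp add: field_simps)
    from sX_eq eX_eq show ?thesis
    proof eventually_elim
      case (elim w)
      then have "s (X w) \<noteq> 0" "e1 (X w) \<noteq> 0" "1 - e1 (X w) \<noteq> 0" "1 - q \<noteq> 0"
        using q_bounds by auto
      with elim c have "w1 w * (sX w * eX w * (EY1 w - mu1h (X w)))
          = pol (X w) / (1 - q) * (1 - sX w) * (EY1 w - mu1h (X w))"
        and "w0 w * (sX w * (1 - eX w) * (EY0 w - mu0h (X w)))
          = (1 - pol (X w)) / (1 - q) * (1 - sX w) * (EY0 w - mu0h (X w))"
        by (simp_all add: w1_def w0_def cancel)
      then show ?case by (simp add: k_def divide_inverse algebra_simps)
    qed
  qed
  have "(\<integral>w. se_term q pol mu0h mu1h eh sh (X w, G w, A w, Y w) \<partial>M) = (\<integral>w. T1 w + T0 w + T w \<partial>M)"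
    by (simp add: se_term_def T1_def T0_def T_def)
  also have "\<dots> = (\<integral>w. w1 w * (G w * A w * (Y1 w - mu1h (X w))) \<partial>M)
      + (\<integral>w. w0 w * (G w * (1 - A w) * (Y0 w - mu0h (X w))) \<partial>M) + (\<integral>w. k w * (1 - G w) \<partial>M)"
    using int_terms[folded T1_def T0_def T_def]
    by (simp add: Bochner_Integration.integral_cong[OF refl T1_eq] Bochner_Integration.integral_cong[OF refl T0_eq] T_eq)
  also have "\<dots> = (\<integral>w. w1 w * (sX w * eX w * (EY1 w - mu1h (X w)))
      + w0 w * (sX w * (1 - eX w) * (EY0 w - mu0h (X w))) + k w * (1 - sX w) \<partial>M)"
    using E1 E0 Ek by simp
  also have "\<dots> = (\<integral>w. (1 - sX w) * (pol (X w) * EY1 w + (1 - pol (X w)) * EY0 w) / (1 - q) \<partial>M)"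
    by (rule integral_cong_AE[OF _ _ ae]) measurable
  also have "\<dots> = policy_value M X G Y0 Y1 pol"
    by (simp add: policy_value_eq[OF pol pol_bin])
  finally show ?thesis .
qed

end

theorem proposition2:
  fixes M :: "'w measure"
    and X :: "'w \<Rightarrow> real ^ 'p"
    and G A Y0 Y1 Y :: "'w \<Rightarrow> real"
    and pol mu0 mu1 e1 s mu0h mu1h eh sh :: "real ^ 'p \<Rightarrow> real"
    and q :: real and n :: nat
  assumes M: "prob_space M"
    and meas: "X \<in> borel_measurable M" "G \<in> borel_measurable M" "A \<in> borel_measurable M"
              "Y0 \<in> borel_measurable M" "Y1 \<in> borel_measurable M"
    and binary: "\<forall>w\<in>space M. G w \<in> {0, 1} \<and> A w \<in> {0, 1}"
    and consistency: "\<forall>w\<in>space M. Y w = A w * Y1 w + (1 - A w) * Y0 w"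
    and int_Y: "integrable M Y0" "integrable M Y1"
    and q_def: "q = measure M {w \<in> space M. G w = 1}"
    and q_bounds: "0 < q" "q < 1"
    \<comment> \<open>nuisance functions (versions of the conditional expectations)\<close>
    and e1_def: "is_cond_exp_fn (cond_on M (\<lambda>w. G w = 1)) X A e1"
    and s_def: "is_cond_exp_fn M X G s"
    and mu1_def: "is_cond_exp_fn (cond_on M (\<lambda>w. A w = 1 \<and> G w = 1)) X Y mu1"
    and mu0_def: "is_cond_exp_fn (cond_on M (\<lambda>w. A w = 0 \<and> G w = 1)) X Y mu0"
    \<comment> \<open>Assumption (A1)\<close>
    and A1_indep: "cond_indep (cond_on M (\<lambda>w. G w = 1)) borel (\<lambda>w. (Y1 w, Y0 w)) borel A borel X"
    and A1_pos: "AE w in M. G w = 1 \<longrightarrow> 0 < e1 (X w) \<and> e1 (X w) < 1"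
    \<comment> \<open>Assumption (A2)\<close>
    and A2_indep: "cond_indep M borel (\<lambda>w. (Y0 w, Y1 w)) borel G borel X"
    and A2_pos: "AE w in M. 0 < s (X w) \<and> s (X w) < 1"
    \<comment> \<open>policy and fixed estimated nuisance functions\<close>
    and pol_meas: "pol \<in> borel_measurable borel" and pol_bin: "\<forall>x. pol x \<in> {0, 1}"
    and est_meas: "mu0h \<in> borel_measurable borel" "mu1h \<in> borel_measurable borel"
                  "eh \<in> borel_measurable borel" "sh \<in> borel_measurable borel"
    \<comment> \<open>regularity: the per-unit terms of the estimator have finite expectation\<close>
    and int_terms:
      "integrable M (\<lambda>w. G w / (1 - q) * (pol (X w) * A w * (Y w - mu1h (X w)) / eh (X w))
                          * ((1 - sh (X w)) / sh (X w)))"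
      "integrable M (\<lambda>w. G w / (1 - q) * ((1 - pol (X w)) * (1 - A w) * (Y w - mu0h (X w)) / (1 - eh (X w)))
                          * ((1 - sh (X w)) / sh (X w)))"
      "integrable M (\<lambda>w. (1 - G w) / (1 - q) * (pol (X w) * mu1h (X w) + (1 - pol (X w)) * mu0h (X w)))"
    and n_pos: "n > 0"
    \<comment> \<open>(i) outcome models correct, or (ii) treatment and selection models correct\<close>
    and correct: "(mu1h = mu1 \<and> mu0h = mu0) \<or> (eh = e1 \<and> sh = s)"
  shows "(\<integral> z. R_SE n q pol mu0h mu1h eh sh z
            \<partial>(PiM {..<n} (\<lambda>_. distr M borel (\<lambda>w. (X w, G w, A w, Y w)))))
         = policy_value M X G Y0 Y1 pol"
  proof -
  interpret transport_model M X G A Y0 Y1 Y mu0 mu1 e1 s q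
    by (rule transport_model.intro) (rule assms)+
  let ?D = "distr M borel (\<lambda>w. (X w, G w, A w, Y w))"
  let ?se = "se_term q pol mu0h mu1h eh sh"
  note [measurable] = pol_meas est_meas
  have unit[measurable]: "(\<lambda>w. (X w, G w, A w, Y w)) \<in> borel_measurable M" by measurable
  have se[measurable]: "?se \<in> borel_measurable borel"
    unfolding se_term_def borel_prod[symmetric] by measurable
  have "integrable M (\<lambda>w. ?se (X w, G w, A w, Y w))"
    using Bochner_Integration.integrable_add[OF Bochner_Integration.integrable_add[OF int_terms(1,2)] int_terms(3)]
    by (simp add: se_term_def)
  then have "integrable ?D ?se" by (subst integrable_distr_eq) simp_all
  moreover have "integral\<^sup>L ?D ?se = policy_value M X G Y0 Y1 pol"
    using integral_distr[OF unit se] integral_se_term[OF pol_meas pol_bin est_meas int_terms correct] by simp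
  ultimately show ?thesis
    unfolding R_SE_def using integral_PiM_average[OF prob_space_distr[OF unit] _ n_pos] by simp
qed

end
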